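(* Consider any instance of the rescheduling problem $(1, h_1 \mid \Delta_{\max}\le k \mid \sum_{j=1}^n w_j C_j)$ (i.e., $\mu=0$) described in the context, and suppose it admits a feasible schedule. Then there exists an optimal schedule $\sigma^*$ such that, if the earlier schedule of $\sigma^*$ contains an idle period, then $\Delta_{\max}(\sigma^* )=k$.
   Context: An instance consists of $n$ jobs $J_1,\dots,J_n$, where $J_j$ has a positive integer processing time $p_j$ and positive integer weight $w_j$, indexed so that $p_1/w_1\le\cdots\le p_n/w_n$; integers $0\le T_1<T_2$ (machine unavailable during $[T_1,T_2]$); an integer $k$. The original schedule $\pi^*$ processes $J_1,\dots,J_n$ in order consecutively from time $0$ without idling, so $S_j(\pi^* )=\sum_{i<j}p_i$, $C_j(\pi^* )=\sum_{i\le j}p_i$. A schedule $\sigma$ gives start times $S_j(\sigma)\ge0$, non-preemptive single-machine processing, $C_j(\sigma)=S_j(\sigma)+p_j$, no overlaps, and each job has $C_j(\sigma)\le T_1$ or $S_j(\sigma)\ge T_2$. $\Delta_j=|C_j(\sigma)-C_j(\pi^* )|$, $\Delta_{\max}=\max_j\Delta_j$. Feasible means $\Delta_{\max}\le k$; optimal means feasible and minimizing $\sum_j w_jC_j(\sigma)$. The earlier schedule consists of jobs with $C_j(\sigma)\le T_1$. An idle period of the earlier schedule is a maximal time interval of positive length within $[0,c]$, where $c$ is the largest completion time of an earlier-schedule job, during which no job is processed. Standing assumptions: some job has $C_j(\pi^* )>T_1$; with $j_1$ the smallest such index, $\min_jp_j\le T_1<\sum_jp_j$ and $T_2-S_{j_1}(\pi^*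 )\le k$. *)

theory Defs
  imports Complex_Main
begin

definition C_orig :: "(nat \<Rightarrow> nat) \<Rightarrow> nat \<Rightarrow> nat" where
  "C_orig p j = (\<Sum>i\<in>{1..j}. p i)"

definition S_orig :: "(nat \<Rightarrow> nat) \<Rightarrow> nat \<Rightarrow> nat" where
  "S_orig p j = (\<Sum>i\<in>{1..<j}. p i)"

definition compl :: "(nat \<Rightarrow> nat) \<Rightarrow> (nat \<Rightarrow> real) \<Rightarrow> nat \<Rightarrow> real" where
  "compl p S j = S j + real (p j)"

definition valid_schedule ::
  "nat \<Rightarrow> (nat \<Rightarrow> nat) \<Rightarrow> nat \<Rightarrow> nat \<Rightarrow> (nat \<Rightarrow> real) \<Rightarrow> bool" where
  "valid_schedule n p T1 T2 S \<longleftrightarrow>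
     (\<forall>j\<in>{1..n}. S j \<ge> 0) \<and>
     (\<forall>i\<in>{1..n}. \<forall>j\<in>{1..n}. i \<noteq> j \<longrightarrow> compl p S i \<le> S j \<or> compl p S j \<le> S i) \<and>
     (\<forall>j\<in>{1..n}. compl p S j \<le> real T1 \<or> S j \<ge> real T2)"

definition Delta :: "(nat \<Rightarrow> nat) \<Rightarrow> (nat \<Rightarrow> real) \<Rightarrow> nat \<Rightarrow> real" where
  "Delta p S j = \<bar>compl p S j - real (C_orig p j)\<bar>"

definition Delta_max :: "nat \<Rightarrow> (nat \<Rightarrow> nat) \<Rightarrow> (nat \<Rightarrow> real) \<Rightarrow> real" where
  "Delta_max n p S = Max (Delta p S ` {1..n})"

definition feasible ::
  "nat \<Rightarrow> (nat \<Rightarrow> nat) \<Rightarrow> nat \<Rightarrow> nat \<Rightarrow> int \<Rightarrow> (nat \<Rightarrow> real) \<Rightarrow> bool" where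
  "feasible n p T1 T2 k S \<longleftrightarrow> valid_schedule n p T1 T2 S \<and> Delta_max n p S \<le> real_of_int k"

definition wct :: "nat \<Rightarrow> (nat \<Rightarrow> nat) \<Rightarrow> (nat \<Rightarrow> nat) \<Rightarrow> (nat \<Rightarrow> real) \<Rightarrow> real" where
  "wct n p w S = (\<Sum>j\<in>{1..n}. real (w j) * compl p S j)"

definition optimal ::
  "nat \<Rightarrow> (nat \<Rightarrow> nat) \<Rightarrow> (nat \<Rightarrow> nat) \<Rightarrow> nat \<Rightarrow> nat \<Rightarrow> int \<Rightarrow> (nat \<Rightarrow> real) \<Rightarrow> bool" where
  "optimal n p w T1 T2 k S \<longleftrightarrow> feasible n p T1 T2 k S \<and>
     (\<forall>S'. feasible n p T1 T2 k S' \<longrightarrow> wct n p w S \<le> wct n p w S')"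

definition earlier_jobs :: "nat \<Rightarrow> (nat \<Rightarrow> nat) \<Rightarrow> nat \<Rightarrow> (nat \<Rightarrow> real) \<Rightarrow> nat set" where
  "earlier_jobs n p T1 S = {j\<in>{1..n}. compl p S j \<le> real T1}"

definition earlier_end :: "nat \<Rightarrow> (nat \<Rightarrow> nat) \<Rightarrow> nat \<Rightarrow> (nat \<Rightarrow> real) \<Rightarrow> real" where
  "earlier_end n p T1 S = Max (compl p S ` earlier_jobs n p T1 S)"

definition idle_on :: "nat \<Rightarrow> (nat \<Rightarrow> nat) \<Rightarrow> (nat \<Rightarrow> real) \<Rightarrow> real \<Rightarrow> real \<Rightarrow> bool" where
  "idle_on n p S a b \<longleftrightarrow> (\<forall>t. a < t \<and> t < b \<longrightarrow> (\<forall>j\<in>{1..n}. \<not> (S j < t \<and> t < compl p S j)))"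

definition idle_period ::
  "nat \<Rightarrow> (nat \<Rightarrow> nat) \<Rightarrow> nat \<Rightarrow> (nat \<Rightarrow> real) \<Rightarrow> real \<Rightarrow> real \<Rightarrow> bool" where
  "idle_period n p T1 S a b \<longleftrightarrow>
     earlier_jobs n p T1 S \<noteq> {} \<and>
     0 \<le> a \<and> a < b \<and> b \<le> earlier_end n p T1 S \<and> idle_on n p S a b \<and>
     (\<forall>a' b'. 0 \<le> a' \<and> a' \<le> a \<and> b \<le> b' \<and> b' \<le> earlier_end n p T1 S \<and> idle_on n p S a' b'
        \<longrightarrow> a' = a \<and> b' = b)"

definition has_idle_period :: "nat \<Rightarrow> (nat \<Rightarrow> nat) \<Rightarrow> nat \<Rightarrow> (nat \<Rightarrow> real) \<Rightarrow> bool" where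
  "has_idle_period n p T1 S \<longleftrightarrow> (\<exists>a b. idle_period n p T1 S a b)"

end

theory Submission
  imports Defs "HOL-Analysis.Analysis"
begin

text \<open>Optimal schedules exist: with the start times of indices outside \<open>{1..n}\<close> fixed to zero,
  the feasible schedules form a compact subset of a product of intervals, on which the objective is
  continuous. Every optimal schedule has the required property, for if \<open>Delta_max < k\<close> and the
  earlier schedule has an idle period, the job starting at its right end can be moved left into
  the gap by a small positive amount without violating any constraint, which strictly decreases
  the objective.\<close>

lemma compact_PiE_UNIV:
  fixes A :: "'i \<Rightarrow> 'a::topological_space set"
  assumes "\<And>i. compact (A i)"
  shows "compact (Pi\<^sub>E UNIV A)"
proof -
  have "compactin (product_topology (\<lambda>i. euclidean) UNIV) (Pi\<^sub>E UNIV A)"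
    using assms by (simp add: compactin_PiE)
  then show ?thesis
    by (simp add: euclidean_product_topology)
qed

lemma Delta_max_le_iff:
  assumes "0 < n"
  shows "Delta_max n p S \<le> K \<longleftrightarrow> (\<forall>j\<in>{1..n}. Delta p S j \<le> K)"
  unfolding Delta_max_def using assms by (subst Max_le_iff) auto

lemma Delta_le_Delta_max:
  assumes "j \<in> {1..n}"
  shows "Delta p S j \<le> Delta_max n p S"
  unfolding Delta_max_def using assms by (intro Max_ge) auto

lemma feasible_iff_Delta_le:
  assumes "0 < n"
  shows "feasible n p T1 T2 k S \<longleftrightarrow>
    valid_schedule n p T1 T2 S \<and> (\<forall>j\<in>{1..n}. Delta p S j \<le> real_of_int k)"
  unfolding feasible_def using Delta_max_le_iff[OF assms] by blast

lemma closed_feasible: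
  assumes "0 < n"
  shows "closed {S. feasible n p T1 T2 k S}"
  unfolding feasible_iff_Delta_le[OF assms] valid_schedule_def Delta_def compl_def Ball_def
  by (intro closed_Collect_conj closed_Collect_all closed_Collect_imp closed_Collect_disj
      closed_Collect_le open_Collect_const continuous_intros continuous_on_product_coordinates)

lemma feasible_start_bounds:
  assumes "feasible n p T1 T2 k S" and "j \<in> {1..n}"
  shows "0 \<le> S j" and "S j \<le> real (\<Sum>i\<in>{1..n}. p i) + real_of_int k"
proof -
  show "0 \<le> S j"
    using assms unfolding feasible_def valid_schedule_def by auto
  have "Delta p S j \<le> real_of_int k"
    using assms Delta_le_Delta_max[of j n p S] unfolding feasible_def by linarith
  then have "S j \<le> real (C_orig p j) + real_of_int k"
    unfolding Delta_def compl_def by linarith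
  moreover have "C_orig p j \<le> (\<Sum>i\<in>{1..n}. p i)"
    unfolding C_orig_def using assms(2) by (intro sum_mono2) auto
  ultimately show "S j \<le> real (\<Sum>i\<in>{1..n}. p i) + real_of_int k"
    by linarith
qed

lemma compact_feasible_zero_outside:
  assumes "0 < n"
  shows "compact ({S. feasible n p T1 T2 k S} \<inter> {S. \<forall>j. j \<notin> {1..n} \<longrightarrow> S j = 0})"
    (is "compact ?F")
proof -
  define M where "M = real (\<Sum>i\<in>{1..n}. p i) + \<bar>real_of_int k\<bar>"
  have box: "?F \<subseteq> Pi\<^sub>E UNIV (\<lambda>_. {0..M})"
  proof (intro subsetI PiE_I)
    fix S j assume "S \<in> ?F"
    then have "feasible n p T1 T2 k S" and "\<forall>j. j \<notin> {1..n} \<longrightarrow> S j = 0"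
      by auto
    moreover have "0 \<le> M"
      unfolding M_def by (simp add: sum_nonneg)
    ultimately show "S j \<in> {0..M}"
      using feasible_start_bounds[of n p T1 T2 k S j] unfolding M_def
      by (cases "j \<in> {1..n}") auto
  qed simp
  have "closed {S::nat \<Rightarrow> real. \<forall>j. j \<notin> {1..n} \<longrightarrow> S j = 0}"
    by (intro closed_Collect_all closed_Collect_imp open_Collect_const closed_Collect_eq
        continuous_intros continuous_on_product_coordinates)
  then have "closed ?F"
    using closed_feasible[OF assms] by (rule closed_Int[rotated])
  then have "compact (Pi\<^sub>E UNIV (\<lambda>_. {0..M}) \<inter> ?F)"
    by (rule compact_Int_closed[OF compact_PiE_UNIV[OF compact_Icc]])
  then show ?thesis
    using box by (simp add: Int_absorb1)
qed

lemma optimal_schedule_exists: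
  assumes "0 < n" and "\<exists>S. feasible n p T1 T2 k S"
  shows "\<exists>S. optimal n p w T1 T2 k S"
proof -
  define F where "F = {S. feasible n p T1 T2 k S} \<inter> {S. \<forall>j. j \<notin> {1..n} \<longrightarrow> S j = 0}"
  define Z where "Z S = (\<lambda>j. if j \<in> {1..n} then S j else 0)" for S :: "nat \<Rightarrow> real"
  have Z_in_F: "Z S \<in> F" if "feasible n p T1 T2 k S" for S
    using that unfolding F_def feasible_iff_Delta_le[OF assms(1)] valid_schedule_def Delta_def
      compl_def Z_def by auto
  have wct_Z: "wct n p w (Z S) = wct n p w S" for S
    unfolding wct_def compl_def Z_def by (intro sum.cong) auto
  have "F \<noteq> {}"
    using assms(2) Z_in_F by blast
  moreover have "continuous_on F (wct n p w)"
    unfolding wct_def compl_def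
    by (intro continuous_intros continuous_on_subset[OF continuous_on_product_coordinates]) auto
  ultimately have "\<exists>S\<in>F. \<forall>S'\<in>F. wct n p w S \<le> wct n p w S'"
    unfolding F_def by (intro continuous_attains_inf compact_feasible_zero_outside assms(1))
  then obtain S where "S \<in> F" and S_min: "\<And>S'. S' \<in> F \<Longrightarrow> wct n p w S \<le> wct n p w S'"
    by blast
  have "optimal n p w T1 T2 k S"
    unfolding optimal_def
  proof (intro conjI allI impI)
    show "feasible n p T1 T2 k S"
      using \<open>S \<in> F\<close> unfolding F_def by simp
    fix S' assume "feasible n p T1 T2 k S'"
    then show "wct n p w S \<le> wct n p w S'"
      using S_min[OF Z_in_F] wct_Z by simp
  qed
  then show ?thesis by blast
qed

lemma wct_shift_job:
  assumes "j \<in> {1..n}"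
  shows "wct n p w (S(j := S j - e)) = wct n p w S - real (w j) * e"
proof -
  have "wct n p w (S(j := S j - e)) =
      (\<Sum>i\<in>{1..n}. real (w i) * compl p S i - (if i = j then real (w j) * e else 0))"
    unfolding wct_def compl_def by (intro sum.cong) (auto simp: algebra_simps)
  also have "\<dots> = wct n p w S - real (w j) * e"
    unfolding wct_def using assms by (simp add: sum_subtractf)
  finally show ?thesis .
qed

lemma idle_on_compl_le:
  assumes "idle_on n p S a b" and "a < b" and "i \<in> {1..n}" and "p i > 0" and "S i < b"
  shows "compl p S i \<le> a"
proof (rule ccontr)
  assume "\<not> compl p S i \<le> a"
  moreover have "S i < compl p S i"
    using assms(4) unfolding compl_def by simp
  moreover define t where "t = (max a (S i) + min b (compl p S i)) / 2"
  ultimately have "a < t" "t < b" "S i < t" "t < compl p S i"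
    using assms(2,5) unfolding t_def by (auto simp: max_def min_def)
  then show False
    using assms(1,3) unfolding idle_on_def by blast
qed

lemma earlier_end_attained:
  assumes "earlier_jobs n p T1 S \<noteq> {}"
  obtains j where "j \<in> {1..n}" and "compl p S j = earlier_end n p T1 S"
    and "earlier_end n p T1 S \<le> real T1"
proof -
  have "earlier_end n p T1 S \<in> compl p S ` earlier_jobs n p T1 S"
    unfolding earlier_end_def using assms by (intro Max_in) (auto simp: earlier_jobs_def)
  then show thesis
    using that by (auto simp: earlier_jobs_def)
qed

text \<open>By maximality of the idle period, the earliest start not before \<open>b\<close> is \<open>b\<close> itself.\<close>
lemma idle_period_end_is_start:
  assumes p_pos: "\<forall>j\<in>{1..n}. p j > 0" and "idle_period n p T1 S a b"
  obtains j where "j \<in> {1..n}" and "S j = b"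
proof -
  define c where "c = earlier_end n p T1 S"
  have E_ne: "earlier_jobs n p T1 S \<noteq> {}" and "a < b" and "b \<le> c"
    and idle: "idle_on n p S a b"
    and maximal: "\<And>b'. b \<le> b' \<Longrightarrow> b' \<le> c \<Longrightarrow> idle_on n p S a b' \<Longrightarrow> b' = b"
    using assms(2) unfolding idle_period_def c_def by auto
  obtain j0 where j0: "j0 \<in> {1..n}" "compl p S j0 = c"
    using earlier_end_attained[OF E_ne] unfolding c_def by blast
  have before_gap: "compl p S i \<le> a" if "i \<in> {1..n}" "S i < b" for i
    using idle_on_compl_le[OF idle \<open>a < b\<close>] that p_pos by blast
  define J where "J = {i\<in>{1..n}. b \<le> S i}"
  have "finite J" and "j0 \<in> J"
    using j0 before_gap \<open>a < b\<close> \<open>b \<le> c\<close> unfolding J_def by force+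
  define m where "m = Min (S ` J)"
  have "m \<in> S ` J"
    unfolding m_def using \<open>finite J\<close> \<open>j0 \<in> J\<close> by (intro Min_in) auto
  then obtain j where "j \<in> J" and Sj: "S j = m"
    by blast
  have m_le: "m \<le> S i" if "i \<in> J" for i
    unfolding m_def using \<open>finite J\<close> that by simp
  have "idle_on n p S a m"
    unfolding idle_on_def
  proof (intro allI impI ballI)
    fix t i assume t: "a < t \<and> t < m" and i: "i \<in> {1..n}"
    show "\<not> (S i < t \<and> t < compl p S i)"
    proof (cases "S i < b")
      case True
      then show ?thesis using before_gap[OF i] t by auto
    next
      case False
      then show ?thesis using m_le[of i] i t unfolding J_def by auto
    qed
  qed
  moreover have "m \<le> c"
    using m_le[OF \<open>j0 \<in> J\<close>] j0 p_pos unfolding compl_def by force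
  moreover have "b \<le> m"
    using \<open>j \<in> J\<close> Sj unfolding J_def by simp
  ultimately have "S j = b"
    using maximal Sj by blast
  then show thesis
    using that \<open>j \<in> J\<close> unfolding J_def by blast
qed

lemma idle_period_followed_by_earlier_job:
  assumes valid: "valid_schedule n p T1 T2 S" and p_pos: "\<forall>j\<in>{1..n}. p j > 0"
    and "T1 < T2" and "idle_period n p T1 S a b"
  obtains j where "j \<in> {1..n}" and "S j = b" and "compl p S j \<le> real T1"
    and "\<And>i. i \<in> {1..n} \<Longrightarrow> i \<noteq> j \<Longrightarrow> compl p S i \<le> a \<or> compl p S j \<le> S i"
proof -
  obtain j where j: "j \<in> {1..n}" "S j = b"
    using idle_period_end_is_start[OF p_pos assms(4)] .
  have E_ne: "earlier_jobs n p T1 S \<noteq> {}" and "a < b" and "b \<le> earlier_end n p T1 S"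
    and idle: "idle_on n p S a b"
    using assms(4) unfolding idle_period_def by auto
  have "earlier_end n p T1 S \<le> real T1"
    using earlier_end_attained[OF E_ne] by blast
  then have "S j < real T2"
    using j(2) \<open>b \<le> earlier_end n p T1 S\<close> \<open>T1 < T2\<close> by simp
  then have "compl p S j \<le> real T1"
    using valid j(1) unfolding valid_schedule_def by force
  moreover have "compl p S i \<le> a \<or> compl p S j \<le> S i" if "i \<in> {1..n}" "i \<noteq> j" for i
  proof -
    have "compl p S i \<le> S j \<or> compl p S j \<le> S i"
      using valid that j(1) unfolding valid_schedule_def by blast
    moreover have "S i < compl p S i"
      using p_pos that(1) unfolding compl_def by simp
    ultimately show ?thesis
      using idle_on_compl_le[OF idle \<open>a < b\<close> that(1)] p_pos that(1) j(2) by force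
  qed
  ultimately show thesis
    using that j by blast
qed

lemma valid_schedule_shift_into_gap:
  assumes valid: "valid_schedule n p T1 T2 S" and "j \<in> {1..n}"
    and "0 \<le> a" and "0 \<le> e" and "a \<le> S j - e" and "compl p S j \<le> real T1"
    and others: "\<And>i. i \<in> {1..n} \<Longrightarrow> i \<noteq> j \<Longrightarrow> compl p S i \<le> a \<or> compl p S j \<le> S i"
  shows "valid_schedule n p T1 T2 (S(j := S j - e))"
proof -
  have compl_shift: "compl p (S(j := S j - e)) i = (if i = j then compl p S j - e else compl p S i)" for i
    unfolding compl_def by simp
  show ?thesis
    unfolding valid_schedule_def
  proof (intro conjI ballI impI)
    fix i assume "i \<in> {1..n}"
    then show "0 \<le> (S(j := S j - e)) i"
      using valid assms(3,5) unfolding valid_schedule_def by auto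
  next
    fix i i' assume "i \<in> {1..n}" "i' \<in> {1..n}" "i \<noteq> i'"
    then show "compl p (S(j := S j - e)) i \<le> (S(j := S j - e)) i' \<or>
        compl p (S(j := S j - e)) i' \<le> (S(j := S j - e)) i"
      using valid others[of i] others[of i'] assms(4,5) unfolding compl_shift valid_schedule_def
      by (cases "i = j"; cases "i' = j") auto
  next
    fix i assume "i \<in> {1..n}"
    then show "compl p (S(j := S j - e)) i \<le> real T1 \<or> real T2 \<le> (S(j := S j - e)) i"
      using valid assms(4,6) unfolding compl_shift valid_schedule_def by auto
  qed
qed

lemma optimal_idle_period_imp_Delta_max_eq:
  assumes p_pos: "\<forall>j\<in>{1..n}. p j > 0" and w_pos: "\<forall>j\<in>{1..n}. w j > 0" and "T1 < T2"
    and opt: "optimal n p w T1 T2 k S" and "idle_period n p T1 S a b"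
  shows "Delta_max n p S = real_of_int k"
proof (rule ccontr)
  assume "Delta_max n p S \<noteq> real_of_int k"
  moreover have valid: "valid_schedule n p T1 T2 S" and "Delta_max n p S \<le> real_of_int k"
    using opt unfolding optimal_def feasible_def by auto
  ultimately have slack: "Delta_max n p S < real_of_int k"
    by simp
  obtain j where j: "j \<in> {1..n}" "S j = b" "compl p S j \<le> real T1"
    and others: "\<And>i. i \<in> {1..n} \<Longrightarrow> i \<noteq> j \<Longrightarrow> compl p S i \<le> a \<or> compl p S j \<le> S i"
    using idle_period_followed_by_earlier_job[OF valid p_pos \<open>T1 < T2\<close> \<open>idle_period n p T1 S a b\<close>] by blast
  have "0 \<le> a" and "a < b"
    using \<open>idle_period n p T1 S a b\<close> unfolding idle_period_def by auto
  define e where "e = min (real_of_int k - Delta_max n p S) (b - a)"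
  define S' where "S' = S(j := S j - e)"
  have "e > 0"
    using slack \<open>a < b\<close> unfolding e_def by simp
  have "valid_schedule n p T1 T2 S'"
    unfolding S'_def using \<open>e > 0\<close> j \<open>0 \<le> a\<close> others unfolding e_def
    by (intro valid_schedule_shift_into_gap[OF valid]) auto
  moreover have "Delta p S' i \<le> real_of_int k" if "i \<in> {1..n}" for i
    using Delta_le_Delta_max[OF that, of p S] \<open>e > 0\<close> slack
    unfolding S'_def Delta_def compl_def e_def by (cases "i = j") auto
  ultimately have "feasible n p T1 T2 k S'"
    using j(1) feasible_iff_Delta_le[of n] by auto
  then have "wct n p w S \<le> wct n p w S'"
    using opt unfolding optimal_def by blast
  moreover have "wct n p w S' = wct n p w S - real (w j) * e"
    unfolding S'_def using j(1) by (rule wct_shift_job)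
  moreover have "real (w j) * e > 0"
    using w_pos j(1) \<open>e > 0\<close> by simp
  ultimately show False
    by linarith
qed

theorem lemma6:
  fixes n :: nat and p w :: "nat \<Rightarrow> nat" and T1 T2 :: nat and k :: int
  assumes p_pos: "\<forall>j\<in>{1..n}. p j > 0"
    and w_pos: "\<forall>j\<in>{1..n}. w j > 0"
    and ordered: "\<forall>i\<in>{1..n}. \<forall>j\<in>{1..n}. i \<le> j \<longrightarrow> real (p i) / real (w i) \<le> real (p j) / real (w j)"
    and T12: "T1 < T2"
    and late_exists: "\<exists>j\<in>{1..n}. C_orig p j > T1"
    and pmin: "Min (p ` {1..n}) \<le> T1"
    and T1_lt: "T1 < (\<Sum>j\<in>{1..n}. p j)"
    and T2_k: "int T2 - int (S_orig p (LEAST j. j \<in> {1..n} \<and> C_orig p j > T1)) \<le> k"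
    and feas: "\<exists>S. feasible n p T1 T2 k S"
  shows "\<exists>S. optimal n p w T1 T2 k S \<and>
           (has_idle_period n p T1 S \<longrightarrow> Delta_max n p S = real_of_int k)"
proof -
  have "0 < n"
    using late_exists by auto
  then obtain S where "optimal n p w T1 T2 k S"
    using optimal_schedule_exists feas by blast
  moreover have "has_idle_period n p T1 S \<longrightarrow> Delta_max n p S = real_of_int k"
    using optimal_idle_period_imp_Delta_max_eq[OF p_pos w_pos T12 \<open>optimal n p w T1 T2 k S\<close>]
    unfolding has_idle_period_def by blast
  ultimately show ?thesis
    by blast
qed

end
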